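(* Let $\xi=e^{2\pi i/3}$. For all integers $k\ge2$ and $i\in\{0,1,2,3\}$, $$[t^{2k-i}]\frac{(1-t)^{k-2}(1-\xi t)^{k-1}}{1-\xi^2t}=3^{k-2}(\xi-1)\xi^{k+i-1}\quad\text{and}\quad [t^{2k-i}]\frac{(1-t)^{k-2}(1-\xi^2 t)^{k-1}}{1-\xi t}=3^{k-2}(1-\xi)\xi^{2k-i}.$$
   Context: $[t^m]F(t)$ denotes the coefficient of $t^m$ in the formal power series $F(t)$. *)

theory Defs
  imports Complex_Main "HOL-Computational_Algebra.Formal_Power_Series"
begin

definition xi :: complex where
  "xi = exp (2 * pi * \<i> / 3)"

end

theory Submission imports Defs "HOL-Computational_Algebra.Polynomial_FPS" begin

text \<open>Dividing a polynomial \<open>P\<close> of degree at most \<open>n\<close> by \<open>1 - c t\<close> and extracting \<open>[t^n]\<close>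
  sums the whole geometric convolution, giving \<open>c^n P(1/c)\<close>. For the two series in question,
  \<open>P\<close> is a product of the linear factors \<open>1 - t\<close> and \<open>1 - \<xi>\<^sup>j t\<close>, so the coefficient is a
  power of \<open>\<xi>\<close> times a product of the factors \<open>1 - \<xi>\<close> and \<open>1 - \<xi>\<^sup>2\<close>, and
  \<open>(1 - \<xi>)(1 - \<xi>\<^sup>2) = 3\<close>.\<close>

lemma inverse_one_minus_const_fps_X:
  fixes c :: "'a :: field"
  shows "inverse (1 - fps_const c * fps_X) = Abs_fps (\<lambda>n. c ^ n)"
proof (rule fps_inverse_unique)
  show "(1 - fps_const c * fps_X) * Abs_fps (\<lambda>n. c ^ n) = 1"
  proof (rule fps_ext)
    fix n
    have "(1 - fps_const c * fps_X) * Abs_fps (\<lambda>n. c ^ n) =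
          Abs_fps (\<lambda>n. c ^ n) - fps_const c * (fps_X * Abs_fps (\<lambda>n. c ^ n))"
      by (simp add: algebra_simps)
    then show "fps_nth ((1 - fps_const c * fps_X) * Abs_fps (\<lambda>n. c ^ n)) n = fps_nth (1 :: 'a fps) n"
      by (cases n) auto
  qed
qed

lemma fps_nth_fps_of_poly_divide_one_minus_const_fps_X:
  fixes c :: "'a :: field"
  assumes "c \<noteq> 0" and "degree p \<le> n"
  shows "fps_nth (fps_of_poly p / (1 - fps_const c * fps_X)) n = c ^ n * poly p (inverse c)"
proof -
  have "fps_nth (fps_of_poly p / (1 - fps_const c * fps_X)) n = (\<Sum>j\<le>n. coeff p j * c ^ (n - j))"
    by (simp add: fps_divide_unit inverse_one_minus_const_fps_X fps_mult_nth atLeast0AtMost)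
  also have "\<dots> = (\<Sum>j\<le>degree p. coeff p j * c ^ (n - j))"
    using assms(2) by (intro sum.mono_neutral_right) (auto simp: coeff_eq_0)
  also have "\<dots> = c ^ n * poly p (inverse c)"
    unfolding poly_altdef sum_distrib_left
    using assms by (intro sum.cong) (auto simp: power_diff field_simps)
  finally show ?thesis .
qed

lemma fps_nth_linear_factors_divide_one_minus_const_fps_X:
  fixes a b c :: "'a :: field"
  assumes "c \<noteq> 0" and "p + q \<le> n"
  shows "fps_nth ((1 - fps_const a * fps_X) ^ p * (1 - fps_const b * fps_X) ^ q
            / (1 - fps_const c * fps_X)) n
         = c ^ n * (1 - a * inverse c) ^ p * (1 - b * inverse c) ^ q"
proof -
  define P where "P = [:1, - a:] ^ p * [:1, - b:] ^ q"
  have linear: "fps_of_poly [:1, - d:] = 1 - fps_const d * fps_X" for d :: 'a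
    by (simp add: fps_of_poly_linear')
  have "degree P \<le> p * degree [:1, - a:] + q * degree [:1, - b:]"
    unfolding P_def using degree_power_le[of "[:1, - a:]" p] degree_power_le[of "[:1, - b:]" q]
    by (intro order.trans[OF degree_mult_le] add_mono) (simp_all add: mult.commute)
  also have "\<dots> \<le> n"
    using assms(2) by (intro order.trans[OF _ assms(2)] add_mono) auto
  finally have "degree P \<le> n" .
  then have "fps_nth (fps_of_poly P / (1 - fps_const c * fps_X)) n = c ^ n * poly P (inverse c)"
    by (rule fps_nth_fps_of_poly_divide_one_minus_const_fps_X[OF assms(1)])
  moreover have "fps_of_poly P = (1 - fps_const a * fps_X) ^ p * (1 - fps_const b * fps_X) ^ q"
    unfolding P_def fps_of_poly_mult fps_of_poly_power linear ..
  ultimately have "fps_nth ((1 - fps_const a * fps_X) ^ p * (1 - fps_const b * fps_X) ^ q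
      / (1 - fps_const c * fps_X)) n = c ^ n * poly P (inverse c)"
    by simp
  then show ?thesis
    by (simp add: P_def mult_ac)
qed

lemma xi_cube: "xi ^ 3 = 1"
proof -
  have "xi ^ 3 = exp (3 * (2 * pi * \<i> / 3))"
    unfolding xi_def by (simp flip: exp_of_nat_mult)
  also have "\<dots> = exp (2 * of_real pi * \<i>)"
    by (simp add: field_simps)
  finally show ?thesis
    by (metis exp_two_pi_i)
qed

lemma xi_neq_1: "xi \<noteq> 1"
proof -
  have "xi = cis (2 * pi / 3)"
    unfolding xi_def cis_conv_exp by (simp add: field_simps)
  then have "Re xi = - 1 / 2"
    using cos_120 by (metis cis.sel(1))
  then show ?thesis by auto
qed

lemma xi_power_add_3_mult: "xi ^ (n + 3 * j) = xi ^ n"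
  by (simp add: power_add power_mult xi_cube)

lemma xi_neq_0: "xi \<noteq> 0"
  using xi_cube by auto

lemma xi_square_neq_0: "xi ^ 2 \<noteq> 0"
  using xi_neq_0 by simp

lemma xi_square_mult_xi_square: "xi ^ 2 * xi ^ 2 = xi"
  using xi_power_add_3_mult[of 1 1] by (simp flip: power_add)

lemma inverse_xi: "inverse xi = xi ^ 2"
  by (rule inverse_unique) (simp add: xi_cube flip: power_Suc)

lemma inverse_xi_square: "inverse (xi ^ 2) = xi"
  by (metis inverse_xi power_inverse power2_eq_square xi_square_mult_xi_square)

lemma xi_mult_inverse_xi_square: "xi * inverse (xi ^ 2) = xi ^ 2"
  unfolding inverse_xi_square by (rule power2_eq_square[symmetric])

lemma xi_square_eq: "xi ^ 2 = - 1 - xi"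
proof -
  have "(xi - 1) * (1 + xi + xi ^ 2) = xi ^ 3 - 1"
    by (simp add: algebra_simps power2_eq_square power3_eq_cube)
  then have "1 + xi + xi ^ 2 = 0"
    using xi_cube xi_neq_1 by simp
  then show ?thesis
    by (simp add: algebra_simps eq_neg_iff_add_eq_0)
qed

lemma xi_mult_xi: "xi * xi = - 1 - xi"
  using xi_square_eq by (simp add: power2_eq_square)

lemma one_minus_xi_mult_one_minus_xi_square: "(1 - xi) * (1 - xi ^ 2) = 3"
  by (simp add: algebra_simps xi_square_eq xi_mult_xi)

lemma one_minus_xi_square: "1 - xi ^ 2 = (xi - 1) * xi ^ 2"
  by (simp add: algebra_simps xi_square_eq xi_mult_xi)

lemma one_minus_xi_power_mult_one_minus_xi_square_power:
  "(1 - xi) ^ m * (1 - xi ^ 2) ^ m = 3 ^ m"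
  by (simp add: one_minus_xi_mult_one_minus_xi_square flip: power_mult_distrib)

lemma xi_square_power_mult_factors:
  assumes "i \<le> 3"
  shows "(xi ^ 2) ^ (2 * m + 4 - i) * (1 - xi) ^ m * (1 - xi ^ 2) ^ (m + 1)
         = 3 ^ m * (xi - 1) * xi ^ (m + 1 + i)"
proof -
  have "(1 - xi ^ 2) ^ (m + 1) = (1 - xi ^ 2) ^ m * ((xi - 1) * xi ^ 2)"
    by (subst one_minus_xi_square[symmetric]) simp
  moreover have "(m + 1 + i) + 3 * (m + 3 - i) = 2 * (2 * m + 4 - i) + 2"
    using assms by simp
  then have "xi ^ (m + 1 + i) = (xi ^ 2) ^ (2 * m + 4 - i) * xi ^ 2"
    by (metis xi_power_add_3_mult power_add power_mult)
  ultimately show ?thesis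
    by (simp only: mult_ac flip: one_minus_xi_power_mult_one_minus_xi_square_power)
qed

lemma xi_power_mult_factors:
  "xi ^ n * (1 - xi ^ 2) ^ m * (1 - xi) ^ (m + 1) = 3 ^ m * (1 - xi) * xi ^ n"
  using one_minus_xi_power_mult_one_minus_xi_square_power[of m] by (simp add: mult_ac)

theorem lemma8:
  fixes k i :: nat
  assumes "k \<ge> 2" and "i \<le> 3"
  shows "fps_nth ((1 - fps_X) ^ (k - 2) * (1 - fps_const xi * fps_X) ^ (k - 1)
                   / (1 - fps_const (xi ^ 2) * fps_X)) (2 * k - i)
           = 3 ^ (k - 2) * (xi - 1) * xi ^ (k + i - 1) \<and>
         fps_nth ((1 - fps_X) ^ (k - 2) * (1 - fps_const (xi ^ 2) * fps_X) ^ (k - 1)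
                   / (1 - fps_const xi * fps_X)) (2 * k - i)
           = 3 ^ (k - 2) * (1 - xi) * xi ^ (2 * k - i)"
proof -
  obtain m where "k = m + 2"
    using assms(1) by (metis add.commute le_iff_add)
  then have k: "k - 2 = m" "k - 1 = m + 1" "2 * k - i = 2 * m + 4 - i" "k + i - 1 = m + 1 + i"
    by simp_all
  have one_minus_X: "1 - fps_X = 1 - fps_const (1 :: complex) * fps_X"
    by simp
  have deg: "(k - 2) + (k - 1) \<le> 2 * k - i"
    using assms by linarith
  have "fps_nth ((1 - fps_X) ^ (k - 2) * (1 - fps_const xi * fps_X) ^ (k - 1)
                   / (1 - fps_const (xi ^ 2) * fps_X)) (2 * k - i)
        = (xi ^ 2) ^ (2 * k - i) * (1 - xi) ^ (k - 2) * (1 - xi ^ 2) ^ (k - 1)"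
    using fps_nth_linear_factors_divide_one_minus_const_fps_X[OF xi_square_neq_0 deg, of 1 xi]
    unfolding one_minus_X mult_1 xi_mult_inverse_xi_square
    unfolding inverse_xi_square .
  moreover have "fps_nth ((1 - fps_X) ^ (k - 2) * (1 - fps_const (xi ^ 2) * fps_X) ^ (k - 1)
                   / (1 - fps_const xi * fps_X)) (2 * k - i)
        = xi ^ (2 * k - i) * (1 - xi ^ 2) ^ (k - 2) * (1 - xi) ^ (k - 1)"
    using fps_nth_linear_factors_divide_one_minus_const_fps_X[OF xi_neq_0 deg, of 1 "xi ^ 2"]
    unfolding one_minus_X mult_1 inverse_xi xi_square_mult_xi_square .
  ultimately show ?thesis
    unfolding k xi_square_power_mult_factors[OF assms(2)] xi_power_mult_factors by blast
qed

end
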